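(* Away from characteristic points of a regular surface $\Sigma\subset E(1,1)$, the mean curvature $\mathcal H_{\nabla^{1,\beta},L}:=\mathrm{tr}\,II^{\nabla^{1,\beta},L}$ satisfies $$\lim_{L\to+\infty}\mathcal H_{\nabla^{1,\beta},L}=X_1(\bar p)+X_2(\bar q).$$
   Context: The group $E(1,1)$ of rigid motions of the Minkowski plane is modeled on $\mathbb{R}^3$ with coordinates $(x_1,x_2,x_3)$. Put $X_1=\partial_{x_3}$, $X_2=\frac{1}{\sqrt2}(-e^{x_3}\partial_{x_1}+e^{-x_3}\partial_{x_2})$, $X_3=-\frac1{\sqrt2}(e^{x_3}\partial_{x_1}+e^{-x_3}\partial_{x_2})$, with dual coframe $\omega_1=dx_3$, $\omega_2=\frac1{\sqrt2}(-e^{-x_3}dx_1+e^{x_3}dx_2)$, $\omega=-\frac1{\sqrt2}(e^{-x_3}dx_1+e^{x_3}dx_2)$. For a constant $L>0$, $g_L=\omega_1\otimes\omega_1+\omega_2\otimes\omega_2+L\,\omega\otimes\omega$, so $X_1,X_2,\widetilde X_3:=L^{-1/2}X_3$ is $g_L$-orthonormal; $\langle\cdot,\cdot\rangle_L$ denotes $g_L$ and $\nabla$ its Levi-Civita connection. Let $P^1$, $P^{1,\perp}$ be the $g_L$-orthogonal projections onto $\mathrm{span}\{X_1,X_2\}$ and onto $\mathrm{span}\{X_3\}$. For a real constant $\beta$, $\nabla^{1,\beta}_XY=(1-\beta)\nabla_XY+\beta P^1\nabla_X(P^1Y)+\beta P^{1,\perp}\nabla_X(P^{1,\perp}Y)$.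 A regular surface is a Euclidean $C^2$-smooth compact oriented surface $\Sigma=\{u=0\}$ with $u$ Euclidean $C^2$ and nonvanishing Euclidean gradient; $\nabla_Hu=X_1(u)X_1+X_2(u)X_2$; characteristic points are those with $\nabla_Hu=0$. Put $p=X_1u$, $q=X_2u$, $r=\widetilde X_3u$, $l=\sqrt{p^2+q^2}$, $l_L=\sqrt{p^2+q^2+r^2}$, $\bar p=p/l$, $\bar q=q/l$, $\bar p_L=p/l_L$, $\bar q_L=q/l_L$, $\bar r_L=r/l_L$; $v_L=\bar p_LX_1+\bar q_LX_2+\bar r_L\widetilde X_3$, $e_1=\bar qX_1-\bar pX_2$, $e_2=\bar r_L\bar pX_1+\bar r_L\bar qX_2-\frac{l}{l_L}\widetilde X_3$. The second fundamental form is $II^{\nabla^{1,\beta},L}=(\langle\nabla^{1,\beta}_{e_i}v_L,e_j\rangle_L)_{i,j=1,2}$. *)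

theory Defs
  imports "HOL-Analysis.Analysis"
begin

type_synonym pt = "real^3"
type_synonym vf = "real^3 \<Rightarrow> real^3"

text \<open>Coordinates x_1, x_2, x_3 are the components x$1, x$2, x$3; the coordinate
  vector field d/dx_i is axis i 1. Vector fields are maps R^3 -> R^3 (components in the
  coordinate basis).\<close>

definition dcoord :: "3 \<Rightarrow> real^3" where "dcoord i = axis i 1"

definition dder :: "(real^3 \<Rightarrow> 'b::real_normed_vector) \<Rightarrow> real^3 \<Rightarrow> real^3 \<Rightarrow> 'b" where
  "dder f x v = frechet_derivative f (at x) v"

definition X1 :: vf where "X1 x = dcoord 3"
definition X2 :: vf where
  "X2 x = (1 / sqrt 2) *\<^sub>R ((- exp (x$3)) *\<^sub>R dcoord 1 + exp (- x$3) *\<^sub>R dcoord 2)"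
definition X3 :: vf where
  "X3 x = (- 1 / sqrt 2) *\<^sub>R (exp (x$3) *\<^sub>R dcoord 1 + exp (- x$3) *\<^sub>R dcoord 2)"

definition om1 :: "real^3 \<Rightarrow> real^3 \<Rightarrow> real" where "om1 x v = v$3"
definition om2 :: "real^3 \<Rightarrow> real^3 \<Rightarrow> real" where
  "om2 x v = (1 / sqrt 2) * (- exp (- x$3) * v$1 + exp (x$3) * v$2)"
definition om :: "real^3 \<Rightarrow> real^3 \<Rightarrow> real" where
  "om x v = (- 1 / sqrt 2) * (exp (- x$3) * v$1 + exp (x$3) * v$2)"

definition gL :: "real \<Rightarrow> real^3 \<Rightarrow> real^3 \<Rightarrow> real^3 \<Rightarrow> real" where
  "gL L x v w = om1 x v * om1 x w + om2 x v * om2 x w + L * om x v * om x w"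

definition Xt3 :: "real \<Rightarrow> vf" where "Xt3 L x = (1 / sqrt L) *\<^sub>R X3 x"

definition gmat :: "real \<Rightarrow> real^3 \<Rightarrow> real^3^3" where
  "gmat L x = (\<chi> i j. gL L x (dcoord i) (dcoord j))"

definition christoffel :: "real \<Rightarrow> real^3 \<Rightarrow> 3 \<Rightarrow> 3 \<Rightarrow> 3 \<Rightarrow> real" where
  "christoffel L x k i j = (1/2) * (\<Sum>l\<in>UNIV. matrix_inv (gmat L x) $ k $ l *
      (dder (\<lambda>y. gmat L y $ j $ l) x (dcoord i) + dder (\<lambda>y. gmat L y $ i $ l) x (dcoord j)
       - dder (\<lambda>y. gmat L y $ i $ j) x (dcoord l)))"

definition LC :: "real \<Rightarrow> vf \<Rightarrow> vf \<Rightarrow> vf" where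
  "LC L X Y x = dder Y x (X x) +
     (\<chi> k. \<Sum>i\<in>UNIV. \<Sum>j\<in>UNIV. christoffel L x k i j * (X x)$i * (Y x)$j)"

text \<open>g_L-orthogonal projections onto span{X1,X2} and span{X3}; since X1, X2, Xt3 is
  g_L-orthonormal they are given by the usual orthonormal-basis formula.\<close>
definition P1 :: "real \<Rightarrow> vf \<Rightarrow> vf" where
  "P1 L Y x = gL L x (Y x) (X1 x) *\<^sub>R X1 x + gL L x (Y x) (X2 x) *\<^sub>R X2 x"
definition P1perp :: "real \<Rightarrow> vf \<Rightarrow> vf" where
  "P1perp L Y x = gL L x (Y x) (Xt3 L x) *\<^sub>R Xt3 L x"

definition conn1b :: "real \<Rightarrow> real \<Rightarrow> vf \<Rightarrow> vf \<Rightarrow> vf" where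
  "conn1b beta L X Y x = (1 - beta) *\<^sub>R LC L X Y x
     + beta *\<^sub>R P1 L (LC L X (P1 L Y)) x
     + beta *\<^sub>R P1perp L (LC L X (P1perp L Y)) x"

definition pu :: "(real^3 \<Rightarrow> real) \<Rightarrow> real^3 \<Rightarrow> real" where "pu u x = dder u x (X1 x)"
definition qu :: "(real^3 \<Rightarrow> real) \<Rightarrow> real^3 \<Rightarrow> real" where "qu u x = dder u x (X2 x)"
definition ru :: "real \<Rightarrow> (real^3 \<Rightarrow> real) \<Rightarrow> real^3 \<Rightarrow> real" where "ru L u x = dder u x (Xt3 L x)"
definition lu :: "(real^3 \<Rightarrow> real) \<Rightarrow> real^3 \<Rightarrow> real" where
  "lu u x = sqrt ((pu u x)^2 + (qu u x)^2)"
definition lLu :: "real \<Rightarrow> (real^3 \<Rightarrow> real) \<Rightarrow> real^3 \<Rightarrow> real" where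
  "lLu L u x = sqrt ((pu u x)^2 + (qu u x)^2 + (ru L u x)^2)"
definition pbar :: "(real^3 \<Rightarrow> real) \<Rightarrow> real^3 \<Rightarrow> real" where "pbar u x = pu u x / lu u x"
definition qbar :: "(real^3 \<Rightarrow> real) \<Rightarrow> real^3 \<Rightarrow> real" where "qbar u x = qu u x / lu u x"
definition pbarL :: "real \<Rightarrow> (real^3 \<Rightarrow> real) \<Rightarrow> real^3 \<Rightarrow> real" where "pbarL L u x = pu u x / lLu L u x"
definition qbarL :: "real \<Rightarrow> (real^3 \<Rightarrow> real) \<Rightarrow> real^3 \<Rightarrow> real" where "qbarL L u x = qu u x / lLu L u x"
definition rbarL :: "real \<Rightarrow> (real^3 \<Rightarrow> real) \<Rightarrow> real^3 \<Rightarrow> real" where "rbarL L u x = ru L u x / lLu L u x"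

definition horgrad :: "(real^3 \<Rightarrow> real) \<Rightarrow> vf" where
  "horgrad u x = pu u x *\<^sub>R X1 x + qu u x *\<^sub>R X2 x"

definition vL :: "real \<Rightarrow> (real^3 \<Rightarrow> real) \<Rightarrow> vf" where
  "vL L u x = pbarL L u x *\<^sub>R X1 x + qbarL L u x *\<^sub>R X2 x + rbarL L u x *\<^sub>R Xt3 L x"
definition e1 :: "(real^3 \<Rightarrow> real) \<Rightarrow> vf" where
  "e1 u x = qbar u x *\<^sub>R X1 x - pbar u x *\<^sub>R X2 x"
definition e2 :: "real \<Rightarrow> (real^3 \<Rightarrow> real) \<Rightarrow> vf" where
  "e2 L u x = (rbarL L u x * pbar u x) *\<^sub>R X1 x + (rbarL L u x * qbar u x) *\<^sub>R X2 x
     - (lu u x / lLu L u x) *\<^sub>R Xt3 L x"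

definition frameE :: "real \<Rightarrow> (real^3 \<Rightarrow> real) \<Rightarrow> nat \<Rightarrow> vf" where
  "frameE L u i = (if i = 1 then e1 u else e2 L u)"
definition IIform :: "real \<Rightarrow> real \<Rightarrow> (real^3 \<Rightarrow> real) \<Rightarrow> real^3 \<Rightarrow> nat \<Rightarrow> nat \<Rightarrow> real" where
  "IIform beta L u x i j = gL L x (conn1b beta L (frameE L u i) (vL L u) x) (frameE L u j x)"
definition meancurv :: "real \<Rightarrow> real \<Rightarrow> (real^3 \<Rightarrow> real) \<Rightarrow> real^3 \<Rightarrow> real" where
  "meancurv beta L u x = IIform beta L u x 1 1 + IIform beta L u x 2 2"

definition regular_defining_fn :: "(real^3 \<Rightarrow> real) \<Rightarrow> bool" where
  "regular_defining_fn u \<longleftrightarrow>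
     (\<exists>Du :: real^3 \<Rightarrow> real^3. \<exists>D2u :: real^3 \<Rightarrow> real^3^3.
        (\<forall>x. (u has_derivative (\<lambda>h. Du x \<bullet> h)) (at x)) \<and>
        (\<forall>x. (Du has_derivative (\<lambda>h. D2u x *v h)) (at x)) \<and>
        continuous_on UNIV D2u \<and>
        (\<forall>x. u x = 0 \<longrightarrow> Du x \<noteq> 0)) \<and>
     compact {x. u x = 0}"

end

theory Submission
  imports Defs
begin

(* In the g_L-orthonormal frame X1, X2, X3/sqrt L every entry of the second fundamental form is
   an explicit expression in the values and differentials at x of p = X1 u, q = X2 u, s = X3 u,
   because g_L depends on x3 only; L enters this expression only through t = 1/sqrt L. It is
   continuous at t = 0, where e2 degenerates to 0, the term of order t carrying (1 - beta)
   vanishes, and the e1-term is the derivative of (p/l, q/l) along e1 = (q/l) X1 - (p/l) X2;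
   since (p/l)^2 + (q/l)^2 = 1 this equals X1(p/l) + X2(q/l). *)

lemma dcoord_nth [simp]: "dcoord i $ j = (if j = i then 1 else 0)"
  by (simp add: dcoord_def axis_def)

lemma has_derivative_vec_nth [derivative_intros]:
  "((\<lambda>y. y $ i) has_derivative (\<lambda>h. h $ i)) F"
  by (rule bounded_linear_imp_has_derivative[OF bounded_linear_vec_nth])

definition dgL :: "real \<Rightarrow> real^3 \<Rightarrow> real^3 \<Rightarrow> real^3 \<Rightarrow> real" where
  "dgL L y v w = -(1 + L) * (om y v * om2 y w + om2 y v * om y w)"

lemma has_derivative_gL:
  "((\<lambda>y. gL L y v w) has_derivative (\<lambda>h. h$3 * dgL L y v w)) (at y)"
  unfolding gL_def om1_def om2_def om_def dgL_def
  apply (rule derivative_eq_intros refl | simp)+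
  apply (simp add: fun_eq_iff field_simps)
  done

lemma dder_gmat: "dder (\<lambda>y. gmat L y $ i $ j) y h = h$3 * dgL L y (dcoord i) (dcoord j)"
proof -
  have "((\<lambda>y. gmat L y $ i $ j) has_derivative (\<lambda>h. h$3 * dgL L y (dcoord i) (dcoord j))) (at y)"
    unfolding gmat_def by (simp add: has_derivative_gL)
  then show ?thesis unfolding dder_def by (metis frechet_derivative_at)
qed

lemma det_gmat: "L > 0 \<Longrightarrow> det (gmat L y) = L"
  by (simp add: det_3 gmat_def gL_def om1_def om2_def om_def field_simps exp_minus power2_eq_square)

lemma gL_eq_inner_gmat: "gL L y v w = w \<bullet> (gmat L y *v v)"
  by (simp add: gL_def gmat_def om1_def om2_def om_def inner_vec_def matrix_vector_mult_def
      sum_3 algebra_simps)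

lemma gmat_mult_matrix_inv: "L > 0 \<Longrightarrow> gmat L y ** matrix_inv (gmat L y) = mat 1"
proof -
  assume "L > 0"
  then have "invertible (gmat L y)" by (simp add: invertible_det_nz det_gmat)
  then show ?thesis unfolding invertible_def matrix_inv_def by (metis (mono_tags, lifting) someI_ex)
qed

(* Koszul formula for coordinate vectors v, w, z: only the x3-derivatives of g_L survive. *)
definition koszul :: "real \<Rightarrow> real^3 \<Rightarrow> real^3 \<Rightarrow> real^3 \<Rightarrow> real^3 \<Rightarrow> real" where
  "koszul L y v w z = 1/2 * (v$3 * dgL L y w z + w$3 * dgL L y v z - z$3 * dgL L y v w)"

lemma gL_christoffel:
  assumes "L > 0"
  shows "gL L y (\<chi> k. \<Sum>i\<in>UNIV. \<Sum>j\<in>UNIV. christoffel L y k i j * v$i * w$j) z = koszul L y v w z"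
proof -
  define lowered where "lowered = (\<chi> l. 1/2 * (\<Sum>i\<in>UNIV. \<Sum>j\<in>UNIV. v$i * w$j *
     (dcoord i $ 3 * dgL L y (dcoord j) (dcoord l) + dcoord j $ 3 * dgL L y (dcoord i) (dcoord l)
      - dcoord l $ 3 * dgL L y (dcoord i) (dcoord j))))"
  have christoffel_eq: "christoffel L y k i j = 1/2 * (\<Sum>l\<in>UNIV. matrix_inv (gmat L y) $ k $ l *
     (dcoord i $ 3 * dgL L y (dcoord j) (dcoord l) + dcoord j $ 3 * dgL L y (dcoord i) (dcoord l)
      - dcoord l $ 3 * dgL L y (dcoord i) (dcoord j)))" for k i j
    unfolding christoffel_def dder_gmat by (simp del: dcoord_nth add: algebra_simps)
  have "(\<chi> k. \<Sum>i\<in>UNIV. \<Sum>j\<in>UNIV. christoffel L y k i j * v$i * w$j) = matrix_inv (gmat L y) *v lowered"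
    unfolding christoffel_eq lowered_def
    by (simp add: vec_eq_iff matrix_vector_mult_def sum_3 algebra_simps)
  moreover have "gmat L y *v (matrix_inv (gmat L y) *v lowered) = lowered"
    using gmat_mult_matrix_inv[OF assms] by (simp add: matrix_vector_mul_assoc)
  moreover have "z \<bullet> lowered = koszul L y v w z"
    unfolding lowered_def koszul_def by (simp add: inner_vec_def sum_3 dgL_def om_def om2_def algebra_simps)
  ultimately show ?thesis by (simp add: gL_eq_inner_gmat)
qed

lemma gL_add_left: "gL L y (v + v') w = gL L y v w + gL L y v' w"
  by (simp add: gL_def om1_def om2_def om_def algebra_simps)

lemma gL_scaleR_left: "gL L y (r *\<^sub>R v) w = r * gL L y v w"
  by (simp add: gL_def om1_def om2_def om_def algebra_simps)

definition frame_vec :: "real \<Rightarrow> real^3 \<Rightarrow> real \<Rightarrow> real \<Rightarrow> real \<Rightarrow> real^3" where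
  "frame_vec L y a b c = a *\<^sub>R X1 y + b *\<^sub>R X2 y + c *\<^sub>R Xt3 L y"

lemma frame_vec_nth:
  "frame_vec L y a b c $ 1 = (- b * exp (y$3) - c / sqrt L * exp (y$3)) / sqrt 2"
  "frame_vec L y a b c $ 2 = (b * exp (- y$3) - c / sqrt L * exp (- y$3)) / sqrt 2"
  "frame_vec L y a b c $ 3 = a"
  by (simp_all add: frame_vec_def X1_def X2_def X3_def Xt3_def field_simps)

lemma om_frame_vec:
  assumes "L > 0"
  shows "om1 y (frame_vec L y a b c) = a" "om2 y (frame_vec L y a b c) = b"
    "om y (frame_vec L y a b c) = c / sqrt L"
  using assms by (simp_all add: om1_def om2_def om_def frame_vec_nth field_simps exp_minus)

lemma gL_frame_vec:
  "L > 0 \<Longrightarrow> gL L y (frame_vec L y a b c) (frame_vec L y a' b' c') = a * a' + b * b' + c * c'"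
  by (simp add: gL_def om_frame_vec field_simps)

lemma dgL_frame_vec:
  "L > 0 \<Longrightarrow> dgL L y (frame_vec L y a b c) (frame_vec L y a' b' c') = -(1 + L) * (c * b' + b * c') / sqrt L"
  by (simp add: dgL_def om_frame_vec field_simps)

lemma frame_vec_add: "frame_vec L y a b c + frame_vec L y a' b' c' = frame_vec L y (a + a') (b + b') (c + c')"
  by (simp add: frame_vec_def algebra_simps)

lemma scaleR_frame_vec: "r *\<^sub>R frame_vec L y a b c = frame_vec L y (r * a) (r * b) (r * c)"
  by (simp add: frame_vec_def algebra_simps)

lemma X1_eq_frame_vec: "X1 y = frame_vec L y 1 0 0"
  by (simp add: frame_vec_def)

lemma X2_eq_frame_vec: "X2 y = frame_vec L y 0 1 0"
  by (simp add: frame_vec_def)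

lemma Xt3_eq_frame_vec: "Xt3 L y = frame_vec L y 0 0 1"
  by (simp add: frame_vec_def)

lemma X3_eq_frame_vec: "L > 0 \<Longrightarrow> X3 y = frame_vec L y 0 0 (sqrt L)"
  by (simp add: frame_vec_def Xt3_def)

lemma has_derivative_X1: "(X1 has_derivative (\<lambda>h. 0)) (at y)"
  unfolding X1_def by simp

lemma has_derivative_X2: "(X2 has_derivative (\<lambda>h. h$3 *\<^sub>R X3 y)) (at y)"
  unfolding X2_def X3_def
  apply (rule derivative_eq_intros refl | simp)+
  apply (simp add: fun_eq_iff algebra_simps)
  done

lemma has_derivative_X3: "(X3 has_derivative (\<lambda>h. h$3 *\<^sub>R X2 y)) (at y)"
  unfolding X2_def X3_def
  apply (rule derivative_eq_intros refl | simp)+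
  apply (simp add: fun_eq_iff algebra_simps)
  done

lemma has_derivative_frame_vec:
  assumes L: "L > 0" and da: "(a has_derivative da) (at y)" and db: "(b has_derivative db) (at y)"
    and dc: "(c has_derivative dc) (at y)"
  shows "((\<lambda>z. frame_vec L z (a z) (b z) (c z)) has_derivative
     (\<lambda>h. frame_vec L y (da h) (db h + h$3 * c y / sqrt L) (dc h + h$3 * b y * sqrt L))) (at y)"
proof -
  have "((\<lambda>z. frame_vec L z (a z) (b z) (c z)) has_derivative
     (\<lambda>h. (a y *\<^sub>R 0 + da h *\<^sub>R X1 y) + (b y *\<^sub>R (h$3 *\<^sub>R X3 y) + db h *\<^sub>R X2 y)
        + (c y *\<^sub>R ((1 / sqrt L) *\<^sub>R (h$3 *\<^sub>R X2 y)) + dc h *\<^sub>R ((1 / sqrt L) *\<^sub>R X3 y)))) (at y)"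
    unfolding frame_vec_def Xt3_def
    by (intro has_derivative_add has_derivative_scaleR has_derivative_scaleR_right
        da db dc has_derivative_X1 has_derivative_X2 has_derivative_X3)
  moreover have "(\<lambda>h. (a y *\<^sub>R 0 + da h *\<^sub>R X1 y) + (b y *\<^sub>R (h$3 *\<^sub>R X3 y) + db h *\<^sub>R X2 y)
        + (c y *\<^sub>R ((1 / sqrt L) *\<^sub>R (h$3 *\<^sub>R X2 y)) + dc h *\<^sub>R ((1 / sqrt L) *\<^sub>R X3 y)))
     = (\<lambda>h. frame_vec L y (da h) (db h + h$3 * c y / sqrt L) (dc h + h$3 * b y * sqrt L))"
  proof
    fix h
    show "(a y *\<^sub>R 0 + da h *\<^sub>R X1 y) + (b y *\<^sub>R (h$3 *\<^sub>R X3 y) + db h *\<^sub>R X2 y)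
        + (c y *\<^sub>R ((1 / sqrt L) *\<^sub>R (h$3 *\<^sub>R X2 y)) + dc h *\<^sub>R ((1 / sqrt L) *\<^sub>R X3 y))
      = frame_vec L y (da h) (db h + h$3 * c y / sqrt L) (dc h + h$3 * b y * sqrt L)"
      unfolding X1_eq_frame_vec[of _ L] X2_eq_frame_vec[of _ L] X3_eq_frame_vec[OF L]
        scaleR_frame_vec frame_vec_add scaleR_zero_right add_0_left
      using L by (simp add: field_simps)
  qed
  ultimately show ?thesis by simp
qed

definition lc_coeff ::
  "real \<Rightarrow> real \<Rightarrow> real \<Rightarrow> real \<Rightarrow> real \<Rightarrow> real \<Rightarrow> real \<Rightarrow> real \<Rightarrow> real \<Rightarrow> real
    \<Rightarrow> real \<Rightarrow> real \<Rightarrow> real \<Rightarrow> real" where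
  "lc_coeff L x1 x2 x3 a0 b0 c0 da db dc w1 w2 w3 =
     da * w1 + (db + x1 * c0 / sqrt L) * w2 + (dc + x1 * b0 * sqrt L) * w3
     + 1/2 * (x1 * (-(1 + L) * (c0 * w2 + b0 * w3) / sqrt L) + a0 * (-(1 + L) * (x3 * w2 + x2 * w3) / sqrt L)
            - w1 * (-(1 + L) * (x3 * b0 + x2 * c0) / sqrt L))"

lemma gL_LC_frame_vec:
  assumes L: "L > 0" and da: "(a has_derivative da) (at y)" and db: "(b has_derivative db) (at y)"
    and dc: "(c has_derivative dc) (at y)" and X: "X y = frame_vec L y x1 x2 x3"
  shows "gL L y (LC L X (\<lambda>z. frame_vec L z (a z) (b z) (c z)) y) (frame_vec L y w1 w2 w3) =
     lc_coeff L x1 x2 x3 (a y) (b y) (c y) (da (X y)) (db (X y)) (dc (X y)) w1 w2 w3"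
proof -
  have "dder (\<lambda>z. frame_vec L z (a z) (b z) (c z)) y (X y) =
    frame_vec L y (da (X y)) (db (X y) + X y$3 * c y / sqrt L) (dc (X y) + X y$3 * b y * sqrt L)"
    unfolding dder_def by (simp add: frechet_derivative_at[OF has_derivative_frame_vec[OF L da db dc], symmetric])
  then show ?thesis
    by (simp add: LC_def gL_add_left gL_christoffel[OF L] koszul_def gL_frame_vec[OF L]
        dgL_frame_vec[OF L] X frame_vec_nth lc_coeff_def)
qed

lemma P1_frame_vec:
  "L > 0 \<Longrightarrow> P1 L (\<lambda>z. frame_vec L z (a z) (b z) (c z)) =
    (\<lambda>z. frame_vec L z (a z) (b z) 0)"
  by (simp add: fun_eq_iff P1_def X1_eq_frame_vec[of _ L] X2_eq_frame_vec[of _ L] gL_frame_vec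
      scaleR_frame_vec frame_vec_add)

lemma P1perp_frame_vec:
  "L > 0 \<Longrightarrow> P1perp L (\<lambda>z. frame_vec L z (a z) (b z) (c z)) =
    (\<lambda>z. frame_vec L z 0 0 (c z))"
  by (simp add: fun_eq_iff P1perp_def Xt3_eq_frame_vec[of L] gL_frame_vec scaleR_frame_vec)

lemma gL_P1_left:
  "gL L y (P1 L Z y) W = gL L y (Z y) (X1 y) * gL L y (X1 y) W + gL L y (Z y) (X2 y) * gL L y (X2 y) W"
  by (simp add: P1_def gL_add_left gL_scaleR_left)

lemma gL_P1perp_left: "gL L y (P1perp L Z y) W = gL L y (Z y) (Xt3 L y) * gL L y (Xt3 L y) W"
  by (simp add: P1perp_def gL_scaleR_left)

lemma gL_conn1b_frame_vec:
  assumes L: "L > 0" and da: "(a has_derivative da) (at y)" and db: "(b has_derivative db) (at y)"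
    and dc: "(c has_derivative dc) (at y)" and X: "X y = frame_vec L y x1 x2 x3"
  shows "gL L y (conn1b beta L X (\<lambda>z. frame_vec L z (a z) (b z) (c z)) y) (frame_vec L y w1 w2 w3) =
     (1 - beta) * lc_coeff L x1 x2 x3 (a y) (b y) (c y) (da (X y)) (db (X y)) (dc (X y)) w1 w2 w3
     + beta * (lc_coeff L x1 x2 x3 (a y) (b y) 0 (da (X y)) (db (X y)) 0 1 0 0 * w1
             + lc_coeff L x1 x2 x3 (a y) (b y) 0 (da (X y)) (db (X y)) 0 0 1 0 * w2)
     + beta * (lc_coeff L x1 x2 x3 0 0 (c y) 0 0 (dc (X y)) 0 0 1 * w3)"
proof -
  have zero: "((\<lambda>z. 0::real) has_derivative (\<lambda>h. 0)) (at y)" by simp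
  show ?thesis
    unfolding conn1b_def gL_add_left gL_scaleR_left gL_P1_left gL_P1perp_left P1_frame_vec[OF L]
      P1perp_frame_vec[OF L] X1_eq_frame_vec[of y L] X2_eq_frame_vec[of y L] Xt3_eq_frame_vec[of L y]
    using gL_LC_frame_vec[where X=X and y=y, OF L da db dc X]
      gL_LC_frame_vec[where X=X and y=y and c="\<lambda>z. 0", OF L da db zero X]
      gL_LC_frame_vec[where X=X and y=y and a="\<lambda>z. 0" and b="\<lambda>z. 0", OF L zero zero dc X]
    by (simp add: gL_frame_vec[OF L])
qed

definition second_form_coeff where
  "second_form_coeff L beta x1 x2 x3 a0 b0 c0 da db dc =
     (1 - beta) * lc_coeff L x1 x2 x3 a0 b0 c0 da db dc x1 x2 x3
     + beta * (lc_coeff L x1 x2 x3 a0 b0 0 da db 0 1 0 0 * x1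
             + lc_coeff L x1 x2 x3 a0 b0 0 da db 0 0 1 0 * x2)
     + beta * (lc_coeff L x1 x2 x3 0 0 c0 0 0 dc 0 0 1 * x3)"

lemma second_form_trace_identity:
  fixes P Q R N l a1 a2 b1 b2 c1 c2 beta :: real
  assumes L: "L > 0" and N: "N > 0" and l: "l > 0"
  shows "second_form_coeff L beta (Q/l) (-P/l) 0 (P/N) (Q/N) (R/N) a1 b1 c1
       + second_form_coeff L beta (R/N*(P/l)) (R/N*(Q/l)) (-(l/N)) (P/N) (Q/N) (R/N) a2 b2 c2
       = Q/l*a1 - P/l*b1 + R/N*(P/l)*a2 + R/N*(Q/l)*b2 - l/N*c2
         + (1-beta)*((R/N)^3*(P/l)*(Q/l) - R/N*(P/l)*(Q/l) + l/N*(R/N)*(P/N)*(Q/l)) * (1 / sqrt L)"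
proof -
  define s where "s = sqrt L"
  have s: "s > 0" "L = s * s" using L by (simp_all add: s_def)
  show ?thesis
    unfolding s_def[symmetric] unfolding s(2) second_form_coeff_def lc_coeff_def
    using s(1) N l by (simp add: field_simps power3_eq_cube)
qed

lemma meancurv_frame_formula:
  fixes P Q R l N :: real
  assumes L: "L > 0" and l: "l > 0" and N: "N > 0"
    and v: "vL L u = (\<lambda>z. frame_vec L z (a z) (b z) (c z))"
    and abc: "a x = P / N" "b x = Q / N" "c x = R / N"
    and da: "(a has_derivative da) (at x)" and db: "(b has_derivative db) (at x)"
    and dc: "(c has_derivative dc) (at x)"
    and e1: "e1 u x = frame_vec L x (Q/l) (-P/l) 0"
    and e2: "e2 L u x = frame_vec L x (R/N*(P/l)) (R/N*(Q/l)) (-(l/N))"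
  shows "meancurv beta L u x = Q/l * da (e1 u x) - P/l * db (e1 u x)
      + R/N*(P/l) * da (e2 L u x) + R/N*(Q/l) * db (e2 L u x) - l/N * dc (e2 L u x)
      + (1-beta)*((R/N)^3*(P/l)*(Q/l) - R/N*(P/l)*(Q/l) + l/N*(R/N)*(P/N)*(Q/l)) * (1 / sqrt L)"
proof -
  have II1: "IIform beta L u x 1 1 = second_form_coeff L beta (Q/l) (-P/l) 0 (P/N) (Q/N) (R/N)
      (da (e1 u x)) (db (e1 u x)) (dc (e1 u x))"
    using gL_conn1b_frame_vec[where X="e1 u" and beta=beta and ?w1.0="Q/l" and ?w2.0="-P/l"
        and ?w3.0=0, OF L da db dc e1]
    unfolding e1[symmetric] abc by (simp add: IIform_def frameE_def v second_form_coeff_def)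
  have II2: "IIform beta L u x 2 2 = second_form_coeff L beta (R/N*(P/l)) (R/N*(Q/l)) (-(l/N))
      (P/N) (Q/N) (R/N) (da (e2 L u x)) (db (e2 L u x)) (dc (e2 L u x))"
    using gL_conn1b_frame_vec[where X="e2 L u" and beta=beta and ?w1.0="R/N*(P/l)"
        and ?w2.0="R/N*(Q/l)" and ?w3.0="-(l/N)", OF L da db dc e2]
    unfolding e2[symmetric] abc by (simp add: IIform_def frameE_def v second_form_coeff_def)
  show ?thesis
    unfolding meancurv_def II1 II2 by (rule second_form_trace_identity[OF L N l])
qed

lemma vL_e1_e2_frame_vec:
  assumes p: "pu u = P" and q: "qu u = Q" and r: "ru L u = R"
    and n: "n = (\<lambda>y. sqrt (P y ^ 2 + Q y ^ 2 + R y ^ 2))" and l: "l = sqrt (P x ^ 2 + Q x ^ 2)"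
  shows "vL L u = (\<lambda>z. frame_vec L z (P z / n z) (Q z / n z) (R z / n z))"
    and "e1 u x = frame_vec L x (Q x / l) (- P x / l) 0"
    and "e1 u x = (Q x / l) *\<^sub>R X1 x - (P x / l) *\<^sub>R X2 x"
    and "e2 L u x = frame_vec L x (R x / n x * (P x / l)) (R x / n x * (Q x / l)) (- (l / n x))"
    and "e2 L u x = (R x / n x * (P x / l)) *\<^sub>R X1 x + (R x / n x * (Q x / l)) *\<^sub>R X2 x
      - (l / n x / sqrt L) *\<^sub>R X3 x"
  by (simp_all add: fun_eq_iff vL_def e1_def e2_def frame_vec_def pbarL_def qbarL_def rbarL_def
      pbar_def qbar_def lLu_def lu_def Xt3_def p q r n l)

definition quotient_deriv :: "real \<Rightarrow> real \<Rightarrow> real \<Rightarrow> real \<Rightarrow> real" where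
  "quotient_deriv f df n dn = (df * n - f * dn) / (n * n)"

lemma quotient_deriv_zero: "quotient_deriv 0 0 n dn = 0"
  by (simp add: quotient_deriv_def)

lemma has_derivative_divide_sqrt_sum_squares:
  fixes F P Q R :: "'a::real_normed_vector \<Rightarrow> real"
  assumes F: "(F has_derivative dF) (at x)" and P: "(P has_derivative dP) (at x)"
    and Q: "(Q has_derivative dQ) (at x)" and R: "(R has_derivative dR) (at x)"
    and pos: "P x ^ 2 + Q x ^ 2 + R x ^ 2 > 0"
  shows "((\<lambda>y. F y / sqrt (P y ^ 2 + Q y ^ 2 + R y ^ 2)) has_derivative
     (\<lambda>h. quotient_deriv (F x) (dF h) (sqrt (P x ^ 2 + Q x ^ 2 + R x ^ 2))
        ((P x * dP h + Q x * dQ h + R x * dR h) / sqrt (P x ^ 2 + Q x ^ 2 + R x ^ 2)))) (at x)"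
proof -
  let ?g = "\<lambda>y. P y ^ 2 + Q y ^ 2 + R y ^ 2"
  have dg: "(?g has_derivative (\<lambda>h. 2 * P x * dP h + 2 * Q x * dQ h + 2 * R x * dR h)) (at x)"
    by (rule has_derivative_eq_rhs, (rule derivative_eq_intros F P Q R refl)+) (simp add: fun_eq_iff)
  have "((\<lambda>y. sqrt (?g y)) has_derivative
      (\<lambda>h. (2 * P x * dP h + 2 * Q x * dQ h + 2 * R x * dR h) * (inverse (sqrt (?g x)) / 2))) (at x)"
    by (rule has_derivative_real_sqrt[where g="?g", OF pos dg])
  moreover have "sqrt (?g x) \<noteq> 0" using pos by simp
  ultimately show ?thesis
    by (rule has_derivative_eq_rhs[OF has_derivative_divide'[OF F]])
      (simp add: fun_eq_iff quotient_deriv_def divide_simps)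
qed

lemma regular_defining_fn_frame_derivatives:
  assumes "regular_defining_fn u"
  obtains P Q S dP dQ dS where "pu u = P" "qu u = Q" "\<forall>L. ru L u = (\<lambda>y. S y * (1 / sqrt L))"
    "(P has_derivative dP) (at x)" "(Q has_derivative dQ) (at x)" "(S has_derivative dS) (at x)"
proof -
  obtain Du :: "real^3 \<Rightarrow> real^3" and D2u :: "real^3 \<Rightarrow> real^3^3" where
    du: "\<And>y. (u has_derivative (\<lambda>h. Du y \<bullet> h)) (at y)" and
    d2u: "\<And>y. (Du has_derivative (\<lambda>h. D2u y *v h)) (at y)"
    using assms unfolding regular_defining_fn_def by blast
  have dder_u: "dder u y v = Du y \<bullet> v" for y v
    unfolding dder_def frechet_derivative_at[OF du, symmetric] by simp
  have "pu u = (\<lambda>y. Du y \<bullet> X1 y)" "qu u = (\<lambda>y. Du y \<bullet> X2 y)"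
    and "\<forall>L. ru L u = (\<lambda>y. (Du y \<bullet> X3 y) * (1 / sqrt L))"
    by (simp_all add: fun_eq_iff pu_def qu_def ru_def dder_u Xt3_def inner_scaleR_right)
  then show ?thesis
    by (rule that[OF _ _ _ has_derivative_inner[OF d2u has_derivative_X1]
          has_derivative_inner[OF d2u has_derivative_X2] has_derivative_inner[OF d2u has_derivative_X3]])
qed

lemma has_derivative_pbar_qbar:
  assumes p: "pu u = P" and q: "qu u = Q" and dP: "(P has_derivative dP) (at x)"
    and dQ: "(Q has_derivative dQ) (at x)" and pos: "P x ^ 2 + Q x ^ 2 > 0"
  defines "l \<equiv> sqrt (P x ^ 2 + Q x ^ 2)"
  shows "(pbar u has_derivative (\<lambda>h. quotient_deriv (P x) (dP h) l ((P x * dP h + Q x * dQ h) / l))) (at x)"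
    and "(qbar u has_derivative (\<lambda>h. quotient_deriv (Q x) (dQ h) l ((P x * dP h + Q x * dQ h) / l))) (at x)"
proof -
  have zero: "((\<lambda>y. 0::real) has_derivative (\<lambda>h. 0)) (at x)" by simp
  have "pbar u = (\<lambda>y. P y / sqrt (P y ^ 2 + Q y ^ 2 + 0 ^ 2))"
    and "qbar u = (\<lambda>y. Q y / sqrt (P y ^ 2 + Q y ^ 2 + 0 ^ 2))"
    by (simp_all add: fun_eq_iff pbar_def qbar_def lu_def p q)
  then show "(pbar u has_derivative (\<lambda>h. quotient_deriv (P x) (dP h) l ((P x * dP h + Q x * dQ h) / l))) (at x)"
    and "(qbar u has_derivative (\<lambda>h. quotient_deriv (Q x) (dQ h) l ((P x * dP h + Q x * dQ h) / l))) (at x)"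
    using has_derivative_divide_sqrt_sum_squares[OF dP dP dQ zero] has_derivative_divide_sqrt_sum_squares[OF dQ dP dQ zero]
      pos by (simp_all add: l_def)
qed

(* Both p/l and q/l vary only through w = q dP - p dQ, because (p/l)^2 + (q/l)^2 = 1. *)
lemma horizontal_divergence_identity:
  fixes p q :: real and dP dQ :: "'a::real_vector \<Rightarrow> real"
  assumes dP: "linear dP" and dQ: "linear dQ" and pos: "p^2 + q^2 > 0"
  defines "l \<equiv> sqrt (p^2 + q^2)"
    and "Dp \<equiv> \<lambda>h. quotient_deriv p (dP h) (sqrt (p^2 + q^2)) ((p * dP h + q * dQ h) / sqrt (p^2 + q^2))"
    and "Dq \<equiv> \<lambda>h. quotient_deriv q (dQ h) (sqrt (p^2 + q^2)) ((p * dP h + q * dQ h) / sqrt (p^2 + q^2))"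
  shows "q/l * Dp ((q/l) *\<^sub>R V1 - (p/l) *\<^sub>R V2) - p/l * Dq ((q/l) *\<^sub>R V1 - (p/l) *\<^sub>R V2)
    = Dp V1 + Dq V2"
proof -
  define w where "w = (\<lambda>h. q * dP h - p * dQ h)"
  have l: "l > 0" "l * l = p^2 + q^2" using pos by (simp_all add: l_def flip: power2_eq_square)
  have Dpw: "Dp h = q * w h / (l * l * l)" and Dqw: "Dq h = - p * w h / (l * l * l)" for h
    using l unfolding Dp_def Dq_def w_def quotient_deriv_def l_def[symmetric]
    by (simp_all add: field_simps power2_eq_square, algebra+)
  have we1: "w ((q/l) *\<^sub>R V1 - (p/l) *\<^sub>R V2) = (q * w V1 - p * w V2) / l"
    unfolding w_def using dP dQ l(1) by (simp add: linear_diff linear_scale field_simps)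
  have combine: "q/l * (q * W / (l * l * l)) - p/l * (- p * W / (l * l * l)) = W / (l * l)" for W
  proof -
    have "q/l * (q * W / (l * l * l)) - p/l * (- p * W / (l * l * l)) = (p^2 + q^2) * W / (l * l * l * l)"
      using l(1) by (simp add: field_simps power2_eq_square)
    also have "\<dots> = W / (l * l)" using l by (simp flip: l(2))
    finally show ?thesis .
  qed
  show ?thesis
    unfolding Dpw Dqw combine we1 using l(1) by (simp add: field_simps)
qed

(* The mean curvature at x in terms of t = 1/sqrt L and the values p, q, s and differentials
   dP, dQ, dS of X1 u, X2 u, X3 u at x; D f df h is the derivative along h of F / l_L, where F
   has value f and differential df at x. *)
definition mean_curvature_model ::
  "real^3 \<Rightarrow> real \<Rightarrow> real \<Rightarrow> real \<Rightarrow> (real^3 \<Rightarrow> real) \<Rightarrow> (real^3 \<Rightarrow> real) \<Rightarrow> (real^3 \<Rightarrow> real)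
    \<Rightarrow> real \<Rightarrow> real \<Rightarrow> real" where
  "mean_curvature_model x p q s dP dQ dS beta t =
    (let l = sqrt (p^2 + q^2); r = s * t; n = sqrt (p^2 + q^2 + r^2);
       e1 = (q/l) *\<^sub>R X1 x - (p/l) *\<^sub>R X2 x;
       e2 = (r/n*(p/l)) *\<^sub>R X1 x + (r/n*(q/l)) *\<^sub>R X2 x - (l/n*t) *\<^sub>R X3 x;
       D = (\<lambda>f df h. quotient_deriv f (df h) n ((p * dP h + q * dQ h + r * (dS h * t)) / n))
     in q/l * D p dP e1 - p/l * D q dQ e1 + r/n*(p/l) * D p dP e2 + r/n*(q/l) * D q dQ e2
        - l/n * D r (\<lambda>h. dS h * t) e2
        + (1-beta)*((r/n)^3*(p/l)*(q/l) - r/n*(p/l)*(q/l) + l/n*(r/n)*(p/n)*(q/l)) * t)"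

lemma meancurv_eq_model:
  assumes L: "L > 0" and p: "pu u = P" and q: "qu u = Q" and r: "ru L u = (\<lambda>y. S y * (1 / sqrt L))"
    and dP: "(P has_derivative dP) (at x)" and dQ: "(Q has_derivative dQ) (at x)"
    and dS: "(S has_derivative dS) (at x)" and pos: "P x ^ 2 + Q x ^ 2 > 0"
  shows "meancurv beta L u x = mean_curvature_model x (P x) (Q x) (S x) dP dQ dS beta (1 / sqrt L)"
proof -
  define t where "t = 1 / sqrt L"
  define R where "R = (\<lambda>y. S y * t)"
  define n where "n = (\<lambda>y. sqrt (P y ^ 2 + Q y ^ 2 + R y ^ 2))"
  define l where "l = sqrt (P x ^ 2 + Q x ^ 2)"
  have l: "l > 0" using pos by (simp add: l_def)
  have pos3: "P x ^ 2 + Q x ^ 2 + R x ^ 2 > 0" using pos by (simp add: add_pos_nonneg)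
  then have n: "n x > 0" by (simp add: n_def)
  have dR: "(R has_derivative (\<lambda>h. dS h * t)) (at x)"
    unfolding R_def by (rule has_derivative_mult_left[OF dS])
  let ?D = "\<lambda>F dF h. quotient_deriv (F x) (dF h) (n x) ((P x * dP h + Q x * dQ h + R x * (dS h * t)) / n x)"
  have da: "((\<lambda>y. P y / n y) has_derivative ?D P dP) (at x)"
    and db: "((\<lambda>y. Q y / n y) has_derivative ?D Q dQ) (at x)"
    and dc: "((\<lambda>y. R y / n y) has_derivative ?D R (\<lambda>h. dS h * t)) (at x)"
    unfolding n_def using has_derivative_divide_sqrt_sum_squares[OF _ dP dQ dR pos3] dP dQ dR by auto
  have "ru L u = R" using r by (simp add: R_def t_def)
  note frame = vL_e1_e2_frame_vec[OF p q this n_def l_def]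
  have "meancurv beta L u x = Q x / l * ?D P dP (e1 u x) - P x / l * ?D Q dQ (e1 u x)
      + R x / n x * (P x / l) * ?D P dP (e2 L u x) + R x / n x * (Q x / l) * ?D Q dQ (e2 L u x)
      - l / n x * ?D R (\<lambda>h. dS h * t) (e2 L u x)
      + (1-beta) * ((R x / n x)^3 * (P x / l) * (Q x / l) - R x / n x * (P x / l) * (Q x / l)
         + l / n x * (R x / n x) * (P x / n x) * (Q x / l)) * (1 / sqrt L)"
    by (rule meancurv_frame_formula[OF L l n frame(1) _ _ _ da db dc frame(2,4)]) simp_all
  also have "\<dots> = mean_curvature_model x (P x) (Q x) (S x) dP dQ dS beta t"
    unfolding mean_curvature_model_def Let_def frame(3,5) by (simp add: R_def n_def l_def t_def)
  finally show ?thesis unfolding t_def .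
qed

lemma isCont_mean_curvature_model:
  assumes pos: "p^2 + q^2 > 0"
    and dP: "bounded_linear dP" and dQ: "bounded_linear dQ" and dS: "bounded_linear dS"
  shows "isCont (mean_curvature_model x p q s dP dQ dS beta) 0"
  unfolding mean_curvature_model_def Let_def quotient_deriv_def
  using pos by (intro continuous_intros bounded_linear.continuous[OF dP]
      bounded_linear.continuous[OF dQ] bounded_linear.continuous[OF dS]) auto

lemma mean_curvature_model_at_0:
  assumes dP: "linear dP" and dQ: "linear dQ" and pos: "p^2 + q^2 > 0"
  defines "l \<equiv> sqrt (p^2 + q^2)"
  shows "mean_curvature_model x p q s dP dQ dS beta 0
    = quotient_deriv p (dP (X1 x)) l ((p * dP (X1 x) + q * dQ (X1 x)) / l)
    + quotient_deriv q (dQ (X2 x)) l ((p * dP (X2 x) + q * dQ (X2 x)) / l)"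
proof -
  let ?e1 = "(q/l) *\<^sub>R X1 x - (p/l) *\<^sub>R X2 x"
  have "mean_curvature_model x p q s dP dQ dS beta 0
    = q/l * quotient_deriv p (dP ?e1) l ((p * dP ?e1 + q * dQ ?e1) / l)
      - p/l * quotient_deriv q (dQ ?e1) l ((p * dP ?e1 + q * dQ ?e1) / l)"
    using dP dQ by (simp add: mean_curvature_model_def Let_def l_def linear_0 quotient_deriv_zero)
  also have "\<dots> = quotient_deriv p (dP (X1 x)) l ((p * dP (X1 x) + q * dQ (X1 x)) / l)
    + quotient_deriv q (dQ (X2 x)) l ((p * dP (X2 x) + q * dQ (X2 x)) / l)"
    unfolding l_def by (rule horizontal_divergence_identity[OF dP dQ pos])
  finally show ?thesis .
qed

theorem proposition4p7:
  fixes u :: "real^3 \<Rightarrow> real" and beta :: real and x :: "real^3"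
  assumes "regular_defining_fn u"
    and "u x = 0"
    and "horgrad u x \<noteq> 0"
  shows "((\<lambda>L. meancurv beta L u x) \<longlongrightarrow>
           dder (pbar u) x (X1 x) + dder (qbar u) x (X2 x)) at_top"
proof -
  (* The argument is pointwise. *)
  obtain P Q S dP dQ dS where p: "pu u = P" and q: "qu u = Q"
    and r: "\<forall>L. ru L u = (\<lambda>y. S y * (1 / sqrt L))" and dP: "(P has_derivative dP) (at x)"
    and dQ: "(Q has_derivative dQ) (at x)" and dS: "(S has_derivative dS) (at x)"
    by (rule regular_defining_fn_frame_derivatives[where x=x, OF assms(1)])
  have pos: "P x ^ 2 + Q x ^ 2 > 0"
    using assms(3) by (auto simp: horgrad_def p q sum_power2_gt_zero_iff)
  let ?H = "mean_curvature_model x (P x) (Q x) (S x) dP dQ dS beta"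
  have "((\<lambda>L. 1 / sqrt L) \<longlongrightarrow> 0) at_top"
    by (rule tendsto_divide_0[OF tendsto_const filterlim_at_top_imp_at_infinity[OF sqrt_at_top]])
  then have lim: "((\<lambda>L. ?H (1 / sqrt L)) \<longlongrightarrow> ?H 0) at_top"
    by (rule isCont_tendsto_compose[OF isCont_mean_curvature_model[OF pos has_derivative_bounded_linear[OF dP]
        has_derivative_bounded_linear[OF dQ] has_derivative_bounded_linear[OF dS]]])
  have val: "?H 0 = dder (pbar u) x (X1 x) + dder (qbar u) x (X2 x)"
    unfolding dder_def has_derivative_pbar_qbar[OF p q dP dQ pos, THEN frechet_derivative_at, symmetric]
    using dP dQ pos by (intro mean_curvature_model_at_0) (auto dest: has_derivative_linear)
  have ev: "eventually (\<lambda>L. ?H (1 / sqrt L) = meancurv beta L u x) at_top"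
    using eventually_gt_at_top[of 0]
    by eventually_elim (simp add: meancurv_eq_model[OF _ p q r[rule_format] dP dQ dS pos])
  show ?thesis
    using Lim_transform_eventually[OF lim ev] unfolding val .
qed

end
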